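(* Let $n\ge 2$ and let $q\in\mathbb{C}$, $q\neq 0,\pm1$, not a root of unity. Then the assignment $$\phi(I_{i+1,i})=\tilde I_{i+1,i}\otimes 1+k_i\otimes I_{i+1,i},\qquad i=1,\dots,n-1,$$ extends to a unital algebra homomorphism $\phi:U'_q(\mathrm{so}_n)\to U_q(\mathrm{sl}_n)\otimes U'_q(\mathrm{so}_n)$ which makes $U'_q(\mathrm{so}_n)$ a (left) $U_q(\mathrm{sl}_n)$-comodule algebra, i.e. $(\Delta\otimes\mathrm{id})\circ\phi=(\mathrm{id}\otimes\phi)\circ\phi$ and $(\varepsilon\otimes\mathrm{id})\circ\phi=\mathrm{id}$. Moreover, if $\iota:U'_q(\mathrm{so}_n)\to U_q(\mathrm{sl}_n)$ denotes the algebra homomorphism $I_{i+1,i}\mapsto \tilde I_{i+1,i}$, then $(\mathrm{id}\otimes\iota)\circ\phi=\Delta\circ\iota$, i.e. the coaction $\phi$ reduces to the comultiplication $\Delta$ of $U_q(\mathrm{sl}_n)$ on the image of $U'_q(\mathrm{so}_n)$.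
   Context: Fix $q\in\mathbb{C}$, $q\ne0,\pm1$, not a root of unity, and a square root $q^{1/2}$. The algebra $U'_q(\mathrm{so}_n)$ is the unital complex associative algebra generated by $I_{21},I_{32},\dots,I_{n,n-1}$ with relations $I_{j,j-1}^2I_{j-1,j-2}+I_{j-1,j-2}I_{j,j-1}^2-(q+q^{-1})I_{j,j-1}I_{j-1,j-2}I_{j,j-1}=-I_{j-1,j-2}$, $I_{j-1,j-2}^2I_{j,j-1}+I_{j,j-1}I_{j-1,j-2}^2-(q+q^{-1})I_{j-1,j-2}I_{j,j-1}I_{j-1,j-2}=-I_{j,j-1}$, and $[I_{i,i-1},I_{j,j-1}]=0$ if $|i-j|>1$. The Drinfeld–Jimbo algebra $U_q(\mathrm{sl}_n)$ is generated by $e_i,f_i,k_i,k_i^{-1}$ ($i=1,\dots,n-1$) with relations $k_ik_i^{-1}=k_i^{-1}k_i=1$, $k_ik_j=k_jk_i$, $k_ie_jk_i^{-1}=q^{a_{ij}}e_j$, $k_if_jk_i^{-1}=q^{-a_{ij}}f_j$, $[e_i,e_j]=[f_i,f_j]=0$ for $|i-j|>1$, $[e_i,f_j]=\delta_{ij}(k_i-k_i^{-1})/(q-q^{-1})$, and the quantum Serre relations $e_i^2e_{i\pm1}-(q+q^{-1})e_ie_{i\pm1}e_i+e_{i\pm1}e_i^2=0$ and the same for $f$'s; here $a_{ii}=2$, $a_{i,i\pm1}=-1$, $a_{ij}=0$ otherwise. It is a Hopf algebra with $\Delta(e_i)=e_i\otimes k_i^{-1}+1\otimes e_i$, $\Delta(f_i)=f_i\otimes1+k_i\otimes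 f_i$, $\Delta(k_i)=k_i\otimes k_i$, counit $\varepsilon(e_i)=\varepsilon(f_i)=0$, $\varepsilon(k_i)=1$. Put $\tilde I_{i+1,i}=f_i-q^{-1}k_ie_i\in U_q(\mathrm{sl}_n)$; these elements satisfy the defining relations of $U'_q(\mathrm{so}_n)$. *)

theory Defs
  imports Complex_Main
begin

text \<open>Terms of the free unital associative complex algebra on generators of type 'x.
  Scal c stands for c times the unit.\<close>
datatype 'x fa = Gen 'x | Scal complex | Add "'x fa" "'x fa" | Mul "'x fa" "'x fa"

definition Sub :: "'x fa \<Rightarrow> 'x fa \<Rightarrow> 'x fa" where
  "Sub a b = Add a (Mul (Scal (-1)) b)"

definition Sm :: "complex \<Rightarrow> 'x fa \<Rightarrow> 'x fa" where
  "Sm c a = Mul (Scal c) a"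

text \<open>The quotient is the
  algebra presented by generators 'x and relations R.\<close>
inductive alg_eq :: "('x fa \<times> 'x fa) set \<Rightarrow> 'x fa \<Rightarrow> 'x fa \<Rightarrow> bool" for R where
  rel: "(a, b) \<in> R \<Longrightarrow> alg_eq R a b"
| refl: "alg_eq R a a"
| sym: "alg_eq R a b \<Longrightarrow> alg_eq R b a"
| trans: "alg_eq R a b \<Longrightarrow> alg_eq R b c \<Longrightarrow> alg_eq R a c"
| add_cong: "alg_eq R a a' \<Longrightarrow> alg_eq R b b' \<Longrightarrow> alg_eq R (Add a b) (Add a' b')"
| mul_cong: "alg_eq R a a' \<Longrightarrow> alg_eq R b b' \<Longrightarrow> alg_eq R (Mul a b) (Mul a' b')"
| add_assoc: "alg_eq R (Add (Add a b) c) (Add a (Add b c))"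
| add_comm: "alg_eq R (Add a b) (Add b a)"
| add_zero: "alg_eq R (Add a (Scal 0)) a"
| mul_assoc: "alg_eq R (Mul (Mul a b) c) (Mul a (Mul b c))"
| mul_one_left: "alg_eq R (Mul (Scal 1) a) a"
| mul_one_right: "alg_eq R (Mul a (Scal 1)) a"
| mul_zero: "alg_eq R (Mul (Scal 0) a) (Scal 0)"
| distrib_left: "alg_eq R (Mul a (Add b c)) (Add (Mul a b) (Mul a c))"
| distrib_right: "alg_eq R (Mul (Add a b) c) (Add (Mul a c) (Mul b c))"
| scal_add: "alg_eq R (Add (Scal x) (Scal y)) (Scal (x + y))"
| scal_mul: "alg_eq R (Mul (Scal x) (Scal y)) (Scal (x * y))"
| scal_central: "alg_eq R (Mul (Scal x) a) (Mul a (Scal x))"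

primrec subst :: "('x \<Rightarrow> 'y fa) \<Rightarrow> 'x fa \<Rightarrow> 'y fa" where
  "subst g (Gen x) = g x"
| "subst g (Scal c) = Scal c"
| "subst g (Add a b) = Add (subst g a) (subst g b)"
| "subst g (Mul a b) = Mul (subst g a) (subst g b)"

text \<open>The assignment g on generators induces a well-defined (unital algebra) homomorphism
  from the algebra presented by (X, RA) to the algebra presented by (Y, RB).\<close>
definition extends_to_hom :: "('x fa \<times> 'x fa) set \<Rightarrow> ('y fa \<times> 'y fa) set \<Rightarrow> ('x \<Rightarrow> 'y fa) \<Rightarrow> bool" where
  "extends_to_hom RA RB g \<longleftrightarrow> (\<forall>a b. alg_eq RA a b \<longrightarrow> alg_eq RB (subst g a) (subst g b))"

text \<open>Tensor product A \<otimes> B of presented algebras: generators of A (Inl) and of B (Inr),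
  the relations of both, and commutation of the two families of generators.\<close>
definition tensor_rels :: "('x fa \<times> 'x fa) set \<Rightarrow> ('y fa \<times> 'y fa) set \<Rightarrow> (('x + 'y) fa \<times> ('x + 'y) fa) set" where
  "tensor_rels RA RB =
     (\<lambda>(l, r). (map_fa Inl l, map_fa Inl r)) ` RA
   \<union> (\<lambda>(l, r). (map_fa Inr l, map_fa Inr r)) ` RB
   \<union> {(Mul (Gen (Inl x)) (Gen (Inr y)), Mul (Gen (Inr y)) (Gen (Inl x))) | x y. True}"

datatype slgen = E nat | F nat | K nat | Kinv nat

definition cartan :: "nat \<Rightarrow> nat \<Rightarrow> int" where
  "cartan i j = (if i = j then 2 else if i = j + 1 \<or> j = i + 1 then -1 else 0)"

definition sl_gen_in_range :: "nat \<Rightarrow> slgen \<Rightarrow> bool" where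
  "sl_gen_in_range n g = (case g of E i \<Rightarrow> 1 \<le> i \<and> i \<le> n - 1 | F i \<Rightarrow> 1 \<le> i \<and> i \<le> n - 1
     | K i \<Rightarrow> 1 \<le> i \<and> i \<le> n - 1 | Kinv i \<Rightarrow> 1 \<le> i \<and> i \<le> n - 1)"

text \<open>Defining relations of U_q(sl_n) (generators e_i, f_i, k_i, k_i^{-1}, 1 \<le> i \<le> n-1).
  Generators with an index outside 1..n-1 are set to 0, so the presented algebra is
  U_q(sl_n).\<close>
definition sl_rels :: "nat \<Rightarrow> complex \<Rightarrow> (slgen fa \<times> slgen fa) set" where
  "sl_rels n q =
     {(Gen g, Scal 0) | g. \<not> sl_gen_in_range n g}
   \<union> {(Mul (Gen (K i)) (Gen (Kinv i)), Scal 1) | i. 1 \<le> i \<and> i \<le> n - 1}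
   \<union> {(Mul (Gen (Kinv i)) (Gen (K i)), Scal 1) | i. 1 \<le> i \<and> i \<le> n - 1}
   \<union> {(Mul (Gen (K i)) (Gen (K j)), Mul (Gen (K j)) (Gen (K i))) | i j.
        1 \<le> i \<and> i \<le> n - 1 \<and> 1 \<le> j \<and> j \<le> n - 1}
   \<union> {(Mul (Mul (Gen (K i)) (Gen (E j))) (Gen (Kinv i)), Sm (q powi cartan i j) (Gen (E j))) | i j.
        1 \<le> i \<and> i \<le> n - 1 \<and> 1 \<le> j \<and> j \<le> n - 1}
   \<union> {(Mul (Mul (Gen (K i)) (Gen (F j))) (Gen (Kinv i)), Sm (q powi (- cartan i j)) (Gen (F j))) | i j.
        1 \<le> i \<and> i \<le> n - 1 \<and> 1 \<le> j \<and> j \<le> n - 1}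
   \<union> {(Sub (Mul (Gen (E i)) (Gen (E j))) (Mul (Gen (E j)) (Gen (E i))), Scal 0) | i j.
        1 \<le> i \<and> i \<le> n - 1 \<and> 1 \<le> j \<and> j \<le> n - 1 \<and> (i + 1 < j \<or> j + 1 < i)}
   \<union> {(Sub (Mul (Gen (F i)) (Gen (F j))) (Mul (Gen (F j)) (Gen (F i))), Scal 0) | i j.
        1 \<le> i \<and> i \<le> n - 1 \<and> 1 \<le> j \<and> j \<le> n - 1 \<and> (i + 1 < j \<or> j + 1 < i)}
   \<union> {(Sub (Mul (Gen (E i)) (Gen (F j))) (Mul (Gen (F j)) (Gen (E i))),
        Sm (if i = j then 1 / (q - inverse q) else 0) (Sub (Gen (K i)) (Gen (Kinv i)))) | i j.
        1 \<le> i \<and> i \<le> n - 1 \<and> 1 \<le> j \<and> j \<le> n - 1}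
   \<union> {(Add (Sub (Mul (Mul (Gen (E i)) (Gen (E i))) (Gen (E j)))
                 (Sm (q + inverse q) (Mul (Mul (Gen (E i)) (Gen (E j))) (Gen (E i)))))
            (Mul (Mul (Gen (E j)) (Gen (E i))) (Gen (E i))), Scal 0) | i j.
        1 \<le> i \<and> i \<le> n - 1 \<and> 1 \<le> j \<and> j \<le> n - 1 \<and> (j = i + 1 \<or> i = j + 1)}
   \<union> {(Add (Sub (Mul (Mul (Gen (F i)) (Gen (F i))) (Gen (F j)))
                 (Sm (q + inverse q) (Mul (Mul (Gen (F i)) (Gen (F j))) (Gen (F i)))))
            (Mul (Mul (Gen (F j)) (Gen (F i))) (Gen (F i))), Scal 0) | i j.
        1 \<le> i \<and> i \<le> n - 1 \<and> 1 \<le> j \<and> j \<le> n - 1 \<and> (j = i + 1 \<or> i = j + 1)}"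

definition sl_Delta :: "nat \<Rightarrow> slgen \<Rightarrow> (slgen + slgen) fa" where
  "sl_Delta n g = (if \<not> sl_gen_in_range n g then Scal 0 else (case g of
      E i \<Rightarrow> Add (Mul (Gen (Inl (E i))) (Gen (Inr (Kinv i)))) (Gen (Inr (E i)))
    | F i \<Rightarrow> Add (Gen (Inl (F i))) (Mul (Gen (Inl (K i))) (Gen (Inr (F i))))
    | K i \<Rightarrow> Mul (Gen (Inl (K i))) (Gen (Inr (K i)))
    | Kinv i \<Rightarrow> Mul (Gen (Inl (Kinv i))) (Gen (Inr (Kinv i)))))"

definition sl_eps :: "nat \<Rightarrow> slgen \<Rightarrow> complex" where
  "sl_eps n g = (if \<not> sl_gen_in_range n g then 0 else (case g of
      E i \<Rightarrow> 0 | F i \<Rightarrow> 0 | K i \<Rightarrow> 1 | Kinv i \<Rightarrow> 1))"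

text \<open>I i stands for the generator I_{i+1,i}, 1 \<le> i \<le> n-1.\<close>
datatype sogen = I nat

definition so_rels :: "nat \<Rightarrow> complex \<Rightarrow> (sogen fa \<times> sogen fa) set" where
  "so_rels n q =
     {(Gen (I i), Scal 0) | i. \<not> (1 \<le> i \<and> i \<le> n - 1)}
   \<union> {(Add (Add (Mul (Mul (Gen (I (i+1))) (Gen (I (i+1)))) (Gen (I i)))
                 (Mul (Mul (Gen (I i)) (Gen (I (i+1)))) (Gen (I (i+1)))))
            (Sm (- (q + inverse q)) (Mul (Mul (Gen (I (i+1))) (Gen (I i))) (Gen (I (i+1))))),
        Sm (-1) (Gen (I i))) | i. 1 \<le> i \<and> i + 1 \<le> n - 1}
   \<union> {(Add (Add (Mul (Mul (Gen (I i)) (Gen (I i))) (Gen (I (i+1))))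
                 (Mul (Mul (Gen (I (i+1))) (Gen (I i))) (Gen (I i))))
            (Sm (- (q + inverse q)) (Mul (Mul (Gen (I i)) (Gen (I (i+1)))) (Gen (I i)))),
        Sm (-1) (Gen (I (i+1)))) | i. 1 \<le> i \<and> i + 1 \<le> n - 1}
   \<union> {(Mul (Gen (I i)) (Gen (I j)), Mul (Gen (I j)) (Gen (I i))) | i j.
        1 \<le> i \<and> i \<le> n - 1 \<and> 1 \<le> j \<and> j \<le> n - 1 \<and> (i + 1 < j \<or> j + 1 < i)}"

definition iota_gen :: "nat \<Rightarrow> complex \<Rightarrow> sogen \<Rightarrow> slgen fa" where
  "iota_gen n q g = (case g of I i \<Rightarrow> if 1 \<le> i \<and> i \<le> n - 1
      then Sub (Gen (F i)) (Sm (inverse q) (Mul (Gen (K i)) (Gen (E i)))) else Scal 0)"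

definition phi_gen :: "nat \<Rightarrow> complex \<Rightarrow> sogen \<Rightarrow> (slgen + sogen) fa" where
  "phi_gen n q g = (case g of I i \<Rightarrow> if 1 \<le> i \<and> i \<le> n - 1
      then Add (map_fa Inl (iota_gen n q (I i))) (Mul (Gen (Inl (K i))) (Gen (Inr (I i))))
      else Scal 0)"

definition Delta_id :: "nat \<Rightarrow> slgen + sogen \<Rightarrow> ((slgen + slgen) + sogen) fa" where
  "Delta_id n g = (case g of Inl x \<Rightarrow> map_fa Inl (sl_Delta n x) | Inr y \<Rightarrow> Gen (Inr y))"

text \<open>id \<otimes> phi : U \<otimes> U' \<rightarrow> U \<otimes> (U \<otimes> U'), followed by the associativity identification
  with (U \<otimes> U) \<otimes> U'.\<close>
definition id_phi :: "nat \<Rightarrow> complex \<Rightarrow> slgen + sogen \<Rightarrow> ((slgen + slgen) + sogen) fa" where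
  "id_phi n q g = (case g of Inl x \<Rightarrow> Gen (Inl (Inl x))
     | Inr y \<Rightarrow> map_fa (\<lambda>z. case z of Inl x' \<Rightarrow> Inl (Inr x') | Inr y' \<Rightarrow> Inr y') (phi_gen n q y))"

definition eps_id :: "nat \<Rightarrow> slgen + sogen \<Rightarrow> sogen fa" where
  "eps_id n g = (case g of Inl x \<Rightarrow> Scal (sl_eps n x) | Inr y \<Rightarrow> Gen y)"

definition id_iota :: "nat \<Rightarrow> complex \<Rightarrow> slgen + sogen \<Rightarrow> (slgen + slgen) fa" where
  "id_iota n q g = (case g of Inl x \<Rightarrow> Gen (Inl x) | Inr y \<Rightarrow> map_fa Inr (iota_gen n q y))"

end

theory Submission
  imports Defs
begin

text \<open>All four claims compare algebra homomorphisms out of presented algebras, so they reduce to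
  finitely many identities: the images under \<open>\<phi>\<close> of the defining relations of \<open>U'\<^sub>q(so\<^sub>n)\<close>,
  which involve two indices \<open>i, j\<close> that are either adjacent or distant, and the values of the
  three composite maps on a single generator \<open>I\<^sub>i\<^sub>+\<^sub>1\<^sub>,\<^sub>i\<close>. Each of them is an identity between
  noncommutative polynomials in the generators with indices \<open>i, j\<close>, with coefficients in
  \<open>\<int>[q, q\<^sup>-\<^sup>1, (q\<^sup>2 - 1)\<^sup>-\<^sup>1]\<close>. It is decided by rewriting with relations that hold in the target:
  \<open>k\<^sub>i\<^sup>\<plusminus>\<^sup>1\<close> are moved past \<open>e\<^sub>j, f\<^sub>j\<close> by \<open>q\<close>-commutation, \<open>e\<^sub>i f\<^sub>j\<close> is exchanged, factors of different
  tensor factors are sorted, and Serre and cubic relations eliminate words; the difference of the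
  two sides then reduces to zero. Soundness of the rewriting is proved once, the reductions are
  carried out by evaluation.\<close>

section \<open>Equational reasoning in presented algebras\<close>

lemmas [trans] = alg_eq.trans

lemma alg_eq_Add_cong1: "alg_eq R a a' \<Longrightarrow> alg_eq R (Add a b) (Add a' b)"
  by (simp add: alg_eq.add_cong alg_eq.refl)

lemma alg_eq_Add_cong2: "alg_eq R b b' \<Longrightarrow> alg_eq R (Add a b) (Add a b')"
  by (simp add: alg_eq.add_cong alg_eq.refl)

lemma alg_eq_Mul_cong1: "alg_eq R a a' \<Longrightarrow> alg_eq R (Mul a b) (Mul a' b)"
  by (simp add: alg_eq.mul_cong alg_eq.refl)

lemma alg_eq_Mul_cong2: "alg_eq R b b' \<Longrightarrow> alg_eq R (Mul a b) (Mul a b')"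
  by (simp add: alg_eq.mul_cong alg_eq.refl)

lemma alg_eq_zero_Add: "alg_eq R (Add (Scal 0) a) a"
  by (meson alg_eq.add_comm alg_eq.add_zero alg_eq.trans)

lemma alg_eq_Add_left_commute: "alg_eq R (Add a (Add b c)) (Add b (Add a c))"
proof -
  have "alg_eq R (Add a (Add b c)) (Add (Add a b) c)" by (rule alg_eq.sym, rule alg_eq.add_assoc)
  also have "alg_eq R \<dots> (Add (Add b a) c)" by (rule alg_eq_Add_cong1, rule alg_eq.add_comm)
  also have "alg_eq R \<dots> (Add b (Add a c))" by (rule alg_eq.add_assoc)
  finally show ?thesis .
qed

lemma alg_eq_Add_Add_swap: "alg_eq R (Add (Add a b) (Add c d)) (Add (Add a c) (Add b d))"
proof -
  have "alg_eq R (Add (Add a b) (Add c d)) (Add a (Add b (Add c d)))" by (rule alg_eq.add_assoc)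
  also have "alg_eq R \<dots> (Add a (Add c (Add b d)))"
    by (rule alg_eq_Add_cong2, rule alg_eq_Add_left_commute)
  also have "alg_eq R \<dots> (Add (Add a c) (Add b d))" by (rule alg_eq.sym, rule alg_eq.add_assoc)
  finally show ?thesis .
qed

lemma alg_eq_Mul_zero_right: "alg_eq R (Mul a (Scal 0)) (Scal 0)"
  by (meson alg_eq.mul_zero alg_eq.scal_central alg_eq.sym alg_eq.trans)

lemma alg_eq_Scal_Mul_Scal: "alg_eq R (Mul (Scal x) (Mul (Scal y) a)) (Mul (Scal (x * y)) a)"
  by (meson alg_eq.mul_assoc alg_eq.scal_mul alg_eq_Mul_cong1 alg_eq.sym alg_eq.trans)

lemma alg_eq_Scal_add: "alg_eq R (Add (Mul (Scal x) a) (Mul (Scal y) a)) (Mul (Scal (x + y)) a)"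
  by (meson alg_eq.distrib_right alg_eq.scal_add alg_eq_Mul_cong1 alg_eq.sym alg_eq.trans)

lemma alg_eq_Mul_Scal_left_commute: "alg_eq R (Mul a (Mul (Scal x) b)) (Mul (Scal x) (Mul a b))"
proof -
  have "alg_eq R (Mul a (Mul (Scal x) b)) (Mul (Mul a (Scal x)) b)"
    by (rule alg_eq.sym, rule alg_eq.mul_assoc)
  also have "alg_eq R \<dots> (Mul (Mul (Scal x) a) b)"
    by (rule alg_eq_Mul_cong1, rule alg_eq.sym, rule alg_eq.scal_central)
  also have "alg_eq R \<dots> (Mul (Scal x) (Mul a b))" by (rule alg_eq.mul_assoc)
  finally show ?thesis .
qed

lemma alg_eq_Mul_Mul_reassoc: "alg_eq R (Mul (Mul x y) (Mul z w)) (Mul x (Mul (Mul y z) w))"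
  by (meson alg_eq.mul_assoc alg_eq_Mul_cong2 alg_eq.sym alg_eq.trans)

lemma alg_eq_neg_Add_cancel: "alg_eq R (Add (Mul (Scal (-1)) b) b) (Scal 0)"
proof -
  have "alg_eq R (Add (Mul (Scal (-1)) b) b) (Add (Mul (Scal (-1)) b) (Mul (Scal 1) b))"
    by (rule alg_eq_Add_cong2, rule alg_eq.sym, rule alg_eq.mul_one_left)
  also have "alg_eq R \<dots> (Mul (Scal (-1 + 1)) b)" by (rule alg_eq_Scal_add)
  also have "alg_eq R \<dots> (Scal 0)" by (simp add: alg_eq.mul_zero)
  finally show ?thesis .
qed

lemma alg_eq_solve_right:
  assumes "alg_eq R (Add a b) c"
  shows "alg_eq R b (Add (Mul (Scal (-1)) a) c)"
proof -
  have "alg_eq R b (Add (Scal 0) b)" by (rule alg_eq.sym, rule alg_eq_zero_Add)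
  also have "alg_eq R \<dots> (Add (Add (Mul (Scal (-1)) a) a) b)"
    by (rule alg_eq_Add_cong1, rule alg_eq.sym, rule alg_eq_neg_Add_cancel)
  also have "alg_eq R \<dots> (Add (Mul (Scal (-1)) a) (Add a b))" by (rule alg_eq.add_assoc)
  also have "alg_eq R \<dots> (Add (Mul (Scal (-1)) a) c)" by (rule alg_eq_Add_cong2, rule assms)
  finally show ?thesis .
qed

lemma alg_eq_solve_left:
  "alg_eq R (Add a b) c \<Longrightarrow> alg_eq R a (Add (Mul (Scal (-1)) b) c)"
  by (rule alg_eq_solve_right, rule alg_eq.trans[OF alg_eq.add_comm])

lemma alg_eq_of_diff_eq:
  assumes "alg_eq R (Add a (Mul (Scal (-1)) b)) c"
  shows "alg_eq R a (Add b c)"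
proof -
  have "alg_eq R a (Add (Mul (Scal (-1)) (Mul (Scal (-1)) b)) c)"
    by (rule alg_eq_solve_left, rule assms)
  also have "alg_eq R \<dots> (Add (Mul (Scal ((-1) * (-1))) b) c)"
    by (rule alg_eq_Add_cong1, rule alg_eq_Scal_Mul_Scal)
  also have "alg_eq R \<dots> (Add b c)" by (simp add: alg_eq_Add_cong1 alg_eq.mul_one_left)
  finally show ?thesis .
qed

lemma alg_eq_of_diff_eq_0: "alg_eq R (Add a (Mul (Scal (-1)) b)) (Scal 0) \<Longrightarrow> alg_eq R a b"
  by (meson alg_eq_of_diff_eq alg_eq.add_zero alg_eq.trans)

lemma alg_eq_Scal_cancel:
  assumes "alg_eq R a (Mul (Scal s) b)" and "s \<noteq> 0"
  shows "alg_eq R b (Mul (Scal (inverse s)) a)"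
proof -
  have "alg_eq R b (Mul (Scal (inverse s * s)) b)"
    using assms(2) by (simp add: alg_eq.sym[OF alg_eq.mul_one_left])
  also have "alg_eq R \<dots> (Mul (Scal (inverse s)) (Mul (Scal s) b))"
    by (rule alg_eq.sym, rule alg_eq_Scal_Mul_Scal)
  also have "alg_eq R \<dots> (Mul (Scal (inverse s)) a)" by (rule alg_eq_Mul_cong2, rule alg_eq.sym, rule assms(1))
  finally show ?thesis .
qed

lemma alg_eq_Mul_inverse_left: "alg_eq R (Mul x y) (Scal 1) \<Longrightarrow> alg_eq R (Mul (Mul x y) a) a"
  by (meson alg_eq_Mul_cong1 alg_eq.mul_one_left alg_eq.trans)

lemma alg_eq_Mul_inverse_right: "alg_eq R (Mul x y) (Scal 1) \<Longrightarrow> alg_eq R (Mul a (Mul x y)) a"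
  by (meson alg_eq_Mul_cong2 alg_eq.mul_one_right alg_eq.trans)

lemma alg_eq_conj_exchange_left:
  assumes "alg_eq R (Mul (Mul x y) z) (Mul (Scal s) w)" and "alg_eq R (Mul z x) (Scal 1)"
  shows "alg_eq R (Mul x y) (Mul (Scal s) (Mul w x))"
proof -
  have "alg_eq R (Mul x y) (Mul (Mul x y) (Mul z x))"
    by (rule alg_eq.sym, rule alg_eq_Mul_inverse_right, rule assms(2))
  also have "alg_eq R \<dots> (Mul (Mul (Mul x y) z) x)" by (rule alg_eq.sym, rule alg_eq.mul_assoc)
  also have "alg_eq R \<dots> (Mul (Mul (Scal s) w) x)" by (rule alg_eq_Mul_cong1, rule assms(1))
  also have "alg_eq R \<dots> (Mul (Scal s) (Mul w x))" by (rule alg_eq.mul_assoc)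
  finally show ?thesis .
qed

lemma alg_eq_conj_exchange_right:
  assumes "alg_eq R (Mul (Mul x y) z) (Mul (Scal s) y)" and "alg_eq R (Mul z x) (Scal 1)"
  shows "alg_eq R (Mul y z) (Mul (Scal s) (Mul z y))"
proof -
  have "alg_eq R (Mul y z) (Mul (Mul z x) (Mul y z))"
    by (rule alg_eq.sym, rule alg_eq_Mul_inverse_left, rule assms(2))
  also have "alg_eq R \<dots> (Mul z (Mul (Mul x y) z))" by (rule alg_eq_Mul_Mul_reassoc)
  also have "alg_eq R \<dots> (Mul z (Mul (Scal s) y))" by (rule alg_eq_Mul_cong2, rule assms(1))
  also have "alg_eq R \<dots> (Mul (Scal s) (Mul z y))" by (rule alg_eq_Mul_Scal_left_commute)
  finally show ?thesis .
qed

section \<open>Homomorphisms between presented algebras\<close>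

lemma subst_subst: "subst f (subst g a) = subst (\<lambda>x. subst f (g x)) a"
  by (induction a) auto

lemma subst_Gen: "subst Gen a = a"
  by (induction a) auto

lemma map_fa_eq_subst: "map_fa f a = subst (\<lambda>x. Gen (f x)) a"
  by (induction a) auto

lemma alg_eq_subst:
  assumes "\<And>l r. (l, r) \<in> R \<Longrightarrow> alg_eq R' (subst g l) (subst g r)"
  shows "alg_eq R a b \<Longrightarrow> alg_eq R' (subst g a) (subst g b)"
proof (induction rule: alg_eq.induct)
  case (rel a b)
  then show ?case using assms by auto
qed (auto intro: alg_eq.intros)

lemma extends_to_hom_iff:
  "extends_to_hom R R' g \<longleftrightarrow> (\<forall>(l, r) \<in> R. alg_eq R' (subst g l) (subst g r))"
  unfolding extends_to_hom_def using alg_eq_subst alg_eq.rel by fast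

lemma alg_eq_subst_cong:
  assumes "\<And>x. alg_eq R (f x) (g x)"
  shows "alg_eq R (subst f a) (subst g a)"
  by (induction a) (auto intro: alg_eq.intros assms)

lemma extends_to_hom_comp:
  assumes "extends_to_hom R1 R2 g" and "extends_to_hom R2 R3 h"
  shows "extends_to_hom R1 R3 (\<lambda>x. subst h (g x))"
  using assms by (simp add: extends_to_hom_def flip: subst_subst)

lemma extends_to_hom_Inl: "extends_to_hom RA (tensor_rels RA RB) (\<lambda>x. Gen (Inl x))"
  unfolding extends_to_hom_iff
  by (force simp: tensor_rels_def map_fa_eq_subst intro: alg_eq.rel)

lemma extends_to_hom_Inr: "extends_to_hom RB (tensor_rels RA RB) (\<lambda>x. Gen (Inr x))"
  unfolding extends_to_hom_iff
  by (force simp: tensor_rels_def map_fa_eq_subst intro: alg_eq.rel)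

lemma alg_eq_map_Inl: "alg_eq RA a b \<Longrightarrow> alg_eq (tensor_rels RA RB) (map_fa Inl a) (map_fa Inl b)"
  using extends_to_hom_Inl[of RA RB] unfolding extends_to_hom_def map_fa_eq_subst by blast

lemma tensor_rels_commute:
  "alg_eq (tensor_rels RA RB) (Mul (Gen (Inr y)) (Gen (Inl x))) (Mul (Gen (Inl x)) (Gen (Inr y)))"
  by (rule alg_eq.sym, rule alg_eq.rel) (auto simp: tensor_rels_def)

section \<open>Coefficients in \<open>\<int>[q, q\<^sup>-\<^sup>1, (q\<^sup>2 - 1)\<^sup>-\<^sup>1]\<close>\<close>

text \<open>The operations keep
  the list sorted by exponent and free of zero coefficients, so that zero is exactly \<open>[]\<close>.\<close>

type_synonym lpoly = "(int \<times> int) list"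

fun lpoly_eval :: "complex \<Rightarrow> lpoly \<Rightarrow> complex" where
  "lpoly_eval q [] = 0"
| "lpoly_eval q ((e, c) # p) = of_int c * q powi e + lpoly_eval q p"

fun lpoly_add :: "lpoly \<Rightarrow> lpoly \<Rightarrow> lpoly" where
  "lpoly_add [] p = p"
| "lpoly_add (m # p) [] = m # p"
| "lpoly_add ((e1, c1) # p1) ((e2, c2) # p2) =
     (if e1 < e2 then (e1, c1) # lpoly_add p1 ((e2, c2) # p2)
      else if e2 < e1 then (e2, c2) # lpoly_add ((e1, c1) # p1) p2
      else if c1 + c2 = 0 then lpoly_add p1 p2
      else (e1, c1 + c2) # lpoly_add p1 p2)"

definition lpoly_mul :: "lpoly \<Rightarrow> lpoly \<Rightarrow> lpoly" where
  "lpoly_mul p r = foldr (\<lambda>(e, c). lpoly_add (map (\<lambda>(e', c'). (e + e', c * c')) r)) p []"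

lemma lpoly_eval_add: "lpoly_eval q (lpoly_add a b) = lpoly_eval q a + lpoly_eval q b"
  by (induction a b rule: lpoly_add.induct) (auto simp: algebra_simps add_eq_0_iff2)

lemma lpoly_eval_mul:
  assumes "q \<noteq> 0"
  shows "lpoly_eval q (lpoly_mul a b) = lpoly_eval q a * lpoly_eval q b"
proof -
  have shift: "lpoly_eval q (map (\<lambda>(e', c'). (e + e', c * c')) r) = of_int c * q powi e * lpoly_eval q r"
    for e c r by (induction r) (auto simp: assms power_int_add algebra_simps)
  show ?thesis
    by (induction a) (auto simp: lpoly_mul_def lpoly_eval_add shift algebra_simps)
qed

type_synonym qcoeff = "nat \<times> lpoly"

fun qcoeff_eval :: "complex \<Rightarrow> qcoeff \<Rightarrow> complex" where
  "qcoeff_eval q (k, p) = lpoly_eval q p / (q\<^sup>2 - 1) ^ k"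

fun lpoly_qsq_minus_one_pow :: "nat \<Rightarrow> lpoly" where
  "lpoly_qsq_minus_one_pow 0 = [(0, 1)]"
| "lpoly_qsq_minus_one_pow (Suc k) = lpoly_mul [(0, -1), (2, 1)] (lpoly_qsq_minus_one_pow k)"

fun qcoeff_add :: "qcoeff \<Rightarrow> qcoeff \<Rightarrow> qcoeff" where
  "qcoeff_add (k1, p1) (k2, p2) =
     (if k1 = k2 then (k1, lpoly_add p1 p2)
      else let k = max k1 k2 in (k, lpoly_add (lpoly_mul (lpoly_qsq_minus_one_pow (k - k1)) p1)
                                              (lpoly_mul (lpoly_qsq_minus_one_pow (k - k2)) p2)))"

fun qcoeff_mul :: "qcoeff \<Rightarrow> qcoeff \<Rightarrow> qcoeff" where
  "qcoeff_mul (k1, p1) (k2, p2) = (k1 + k2, lpoly_mul p1 p2)"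

definition qc_monomial :: "int \<Rightarrow> int \<Rightarrow> qcoeff" where
  "qc_monomial c e = (0, [(e, c)])"

abbreviation "qc_one \<equiv> qc_monomial 1 0"
abbreviation "qc_minus_one \<equiv> qc_monomial (-1) 0"

definition qc_zero :: qcoeff where
  "qc_zero = (0, [])"

definition qc_qint2 :: "int \<Rightarrow> qcoeff" where
  "qc_qint2 c = (0, [(-1, c), (1, c)])"

text \<open>\<open>1 / (q - q\<^sup>-\<^sup>1) = q / (q\<^sup>2 - 1)\<close>, the coefficient in \<open>[e\<^sub>i, f\<^sub>i]\<close>.\<close>

definition qc_EF :: qcoeff where
  "qc_EF = (1, [(1, 1)])"

locale q_regular =
  fixes q :: complex
  assumes q_nonzero: "q \<noteq> 0" and q_square_neq_1: "q\<^sup>2 \<noteq> 1"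
begin

lemma lpoly_eval_qsq_minus_one_pow: "lpoly_eval q (lpoly_qsq_minus_one_pow k) = (q\<^sup>2 - 1) ^ k"
  by (induction k) (auto simp: lpoly_eval_mul q_nonzero power2_eq_square)

lemma qcoeff_eval_add: "qcoeff_eval q (qcoeff_add a b) = qcoeff_eval q a + qcoeff_eval q b"
proof -
  obtain k1 p1 k2 p2 where ab: "a = (k1, p1)" "b = (k2, p2)" by fastforce
  define k where "k = max k1 k2"
  define D where "D = q\<^sup>2 - (1::complex)"
  have "D \<noteq> 0" using q_square_neq_1 by (simp add: D_def)
  then have cancel: "D ^ (k - j) * x / D ^ k = x / D ^ j" if "j \<le> k" for j x
    using that by (simp add: power_diff)
  show ?thesis
  proof (cases "k1 = k2")
    case True
    then show ?thesis by (simp add: ab lpoly_eval_add add_divide_distrib)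
  next
    case False
    then have "qcoeff_eval q (qcoeff_add a b) =
        D ^ (k - k1) * lpoly_eval q p1 / D ^ k + D ^ (k - k2) * lpoly_eval q p2 / D ^ k"
      by (simp add: ab Let_def k_def D_def lpoly_eval_add lpoly_eval_mul q_nonzero
          lpoly_eval_qsq_minus_one_pow add_divide_distrib)
    also have "\<dots> = qcoeff_eval q a + qcoeff_eval q b"
      using cancel[of k1] cancel[of k2] by (simp add: k_def ab D_def)
    finally show ?thesis .
  qed
qed

lemma qcoeff_eval_mul: "qcoeff_eval q (qcoeff_mul a b) = qcoeff_eval q a * qcoeff_eval q b"
  by (cases a, cases b) (simp add: lpoly_eval_mul q_nonzero power_add)

lemma qcoeff_eval_constants [simp]:
  "qcoeff_eval q (qc_monomial c e) = of_int c * q powi e"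
  "qcoeff_eval q qc_zero = 0"
  "qcoeff_eval q (qc_qint2 c) = of_int c * (q + inverse q)"
  "qcoeff_eval q qc_EF = 1 / (q - inverse q)"
proof -
  have "q - inverse q = (q\<^sup>2 - 1) / q" using q_nonzero by (simp add: field_simps power2_eq_square)
  then show "qcoeff_eval q qc_EF = 1 / (q - inverse q)" by (simp add: qc_EF_def)
qed (simp_all add: qc_monomial_def qc_zero_def qc_qint2_def power_int_minus algebra_simps)

end

section \<open>Certified normalization of noncommutative polynomials\<close>

text \<open>A noncommutative polynomial is a list of monomials (word, coefficient); the operations keep
  it sorted lexicographically by words and free of zero coefficients, so that \<open>[]\<close> is the only
  representation of zero.\<close>

type_synonym ncpoly = "(nat list \<times> qcoeff) list"

fun word_eval :: "(nat \<Rightarrow> 'y fa) \<Rightarrow> nat list \<Rightarrow> 'y fa" where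
  "word_eval h [] = Scal 1"
| "word_eval h [x] = h x"
| "word_eval h (x # y # w) = Mul (h x) (word_eval h (y # w))"

fun ncpoly_eval :: "complex \<Rightarrow> (nat \<Rightarrow> 'y fa) \<Rightarrow> ncpoly \<Rightarrow> 'y fa" where
  "ncpoly_eval q h [] = Scal 0"
| "ncpoly_eval q h ((w, c) # p) = Add (Mul (Scal (qcoeff_eval q c)) (word_eval h w)) (ncpoly_eval q h p)"

fun ncpoly_add :: "ncpoly \<Rightarrow> ncpoly \<Rightarrow> ncpoly" where
  "ncpoly_add [] p = p"
| "ncpoly_add (m # p) [] = m # p"
| "ncpoly_add ((w1, c1) # p1) ((w2, c2) # p2) =
     (if lexordp (<) w1 w2 then (w1, c1) # ncpoly_add p1 ((w2, c2) # p2)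
      else if w1 = w2 then
        (let c = qcoeff_add c1 c2 in if snd c = [] then ncpoly_add p1 p2 else (w1, c) # ncpoly_add p1 p2)
      else (w2, c2) # ncpoly_add ((w1, c1) # p1) p2)"

definition ncpoly_of_list :: "ncpoly \<Rightarrow> ncpoly" where
  "ncpoly_of_list ms = foldr (\<lambda>m. ncpoly_add [m]) ms []"

definition ncpoly_wrap :: "qcoeff \<Rightarrow> nat list \<Rightarrow> ncpoly \<Rightarrow> nat list \<Rightarrow> ncpoly" where
  "ncpoly_wrap c u p v = map (\<lambda>(w, c'). (u @ w @ v, qcoeff_mul c c')) p"

definition ncpoly_mul :: "ncpoly \<Rightarrow> ncpoly \<Rightarrow> ncpoly" where
  "ncpoly_mul p r = foldr (\<lambda>(w, c). ncpoly_add (ncpoly_of_list (ncpoly_wrap c w r []))) p []"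

datatype nc_term = TVar nat | TConst qcoeff | TAdd nc_term nc_term | TMul nc_term nc_term

type_synonym nc_rule = "nat list \<times> nc_term"

fun term_eval :: "complex \<Rightarrow> (nat \<Rightarrow> 'y fa) \<Rightarrow> nc_term \<Rightarrow> 'y fa" where
  "term_eval q h (TVar x) = h x"
| "term_eval q h (TConst c) = Scal (qcoeff_eval q c)"
| "term_eval q h (TAdd s t) = Add (term_eval q h s) (term_eval q h t)"
| "term_eval q h (TMul s t) = Mul (term_eval q h s) (term_eval q h t)"

fun ncpoly_of_term :: "nc_term \<Rightarrow> ncpoly" where
  "ncpoly_of_term (TVar x) = [([x], (0, [(0, 1)]))]"
| "ncpoly_of_term (TConst c) = (if snd c = [] then [] else [([], c)])"
| "ncpoly_of_term (TAdd s t) = ncpoly_add (ncpoly_of_term s) (ncpoly_of_term t)"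
| "ncpoly_of_term (TMul s t) = ncpoly_mul (ncpoly_of_term s) (ncpoly_of_term t)"

fun drop_prefix :: "nat list \<Rightarrow> nat list \<Rightarrow> nat list option" where
  "drop_prefix [] w = Some w"
| "drop_prefix (x # l) [] = None"
| "drop_prefix (x # l) (y # w) = (if x = y then drop_prefix l w else None)"

fun find_factor :: "nat list \<Rightarrow> nat list \<Rightarrow> (nat list \<times> nat list) option" where
  "find_factor l [] = map_option (Pair []) (drop_prefix l [])"
| "find_factor l (x # w) = (case drop_prefix l (x # w) of
      Some v \<Rightarrow> Some ([], v)
    | None \<Rightarrow> map_option (\<lambda>(u, v). (x # u, v)) (find_factor l w))"

fun find_redex ::
    "(nat list \<times> ncpoly) list \<Rightarrow> nat list \<Rightarrow> (nat list \<times> ncpoly \<times> nat list) option" where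
  "find_redex [] w = None"
| "find_redex ((l, r) # rs) w =
     (case find_factor l w of Some (u, v) \<Rightarrow> Some (u, r, v) | None \<Rightarrow> find_redex rs w)"

fun reduce_monomial :: "(nat list \<times> ncpoly) list \<Rightarrow> nat list \<times> qcoeff \<Rightarrow> ncpoly" where
  "reduce_monomial rs (w, c) = (case find_redex rs w of
      None \<Rightarrow> [(w, c)]
    | Some (u, r, v) \<Rightarrow> ncpoly_of_list (ncpoly_wrap c u r v))"

definition reduce_step :: "(nat list \<times> ncpoly) list \<Rightarrow> ncpoly \<Rightarrow> ncpoly" where
  "reduce_step rs p = foldr (\<lambda>m. ncpoly_add (reduce_monomial rs m)) p []"

fun reduce :: "(nat list \<times> ncpoly) list \<Rightarrow> nat \<Rightarrow> ncpoly \<Rightarrow> ncpoly" where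
  "reduce rs 0 p = p"
| "reduce rs (Suc k) p = (if p = [] then [] else reduce rs k (reduce_step rs p))"

definition rules_sound ::
    "('y fa \<times> 'y fa) set \<Rightarrow> complex \<Rightarrow> (nat \<Rightarrow> 'y fa) \<Rightarrow> nc_rule list \<Rightarrow> bool" where
  "rules_sound R q h rs \<longleftrightarrow> (\<forall>(l, r) \<in> set rs. alg_eq R (word_eval h l) (term_eval q h r))"

definition compile_rules :: "nc_rule list \<Rightarrow> (nat list \<times> ncpoly) list" where
  "compile_rules rs = map (\<lambda>(l, r). (l, ncpoly_of_term r)) rs"

lemma rules_sound_append [simp]:
  "rules_sound R q h (rs @ rs') \<longleftrightarrow> rules_sound R q h rs \<and> rules_sound R q h rs'"
  by (auto simp: rules_sound_def)

lemma find_redex_SomeD: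
  assumes "find_redex rs w = Some (u, r, v)"
  shows "\<exists>l. (l, r) \<in> set rs \<and> w = u @ l @ v"
proof -
  have drop: "drop_prefix l w = Some v \<Longrightarrow> w = l @ v" for l w v
    by (induction l w rule: drop_prefix.induct) (auto split: if_splits)
  have factor: "find_factor l w = Some (u, v) \<Longrightarrow> w = u @ l @ v" for l w u v
    by (induction l w arbitrary: u v rule: find_factor.induct) (auto split: option.splits dest: drop)
  show ?thesis
    using assms by (induction rs w rule: find_redex.induct) (auto split: option.splits dest: factor)
qed

lemma word_eval_Cons: "alg_eq R (word_eval h (x # w)) (Mul (h x) (word_eval h w))"
  by (cases w) (simp_all add: alg_eq.refl alg_eq.sym[OF alg_eq.mul_one_right])

lemma word_eval_append: "alg_eq R (word_eval h (u @ v)) (Mul (word_eval h u) (word_eval h v))"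
proof (induction u)
  case Nil
  show ?case by (simp add: alg_eq.sym[OF alg_eq.mul_one_left])
next
  case (Cons x u)
  have "alg_eq R (word_eval h (x # u @ v)) (Mul (h x) (word_eval h (u @ v)))" by (rule word_eval_Cons)
  also have "alg_eq R \<dots> (Mul (h x) (Mul (word_eval h u) (word_eval h v)))"
    by (rule alg_eq_Mul_cong2, rule Cons)
  also have "alg_eq R \<dots> (Mul (Mul (h x) (word_eval h u)) (word_eval h v))"
    by (rule alg_eq.sym, rule alg_eq.mul_assoc)
  also have "alg_eq R \<dots> (Mul (word_eval h (x # u)) (word_eval h v))"
    by (rule alg_eq_Mul_cong1, rule alg_eq.sym, rule word_eval_Cons)
  finally show ?case by simp
qed

definition nc_diff :: "nc_term \<Rightarrow> nc_term \<Rightarrow> nc_term" where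
  "nc_diff s t = TAdd s (TMul (TConst qc_minus_one) t)"

context q_regular
begin

lemma ncpoly_eval_add: "alg_eq R (ncpoly_eval q h (ncpoly_add a b)) (Add (ncpoly_eval q h a) (ncpoly_eval q h b))"
proof (induction a b rule: ncpoly_add.induct)
  case (1 p)
  show ?case by (simp add: alg_eq.sym[OF alg_eq_zero_Add])
next
  case (2 m p)
  show ?case by (simp add: alg_eq.sym[OF alg_eq.add_zero])
next
  case (3 w1 c1 p1 w2 c2 p2)
  let ?m1 = "Mul (Scal (qcoeff_eval q c1)) (word_eval h w1)"
  let ?m2 = "Mul (Scal (qcoeff_eval q c2)) (word_eval h w2)"
  let ?p1 = "ncpoly_eval q h p1" and ?p2 = "ncpoly_eval q h p2"
  let ?m12 = "Mul (Scal (qcoeff_eval q c1 + qcoeff_eval q c2)) (word_eval h w1)"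
  have merge: "alg_eq R (Add ?m12 (Add ?p1 ?p2)) (Add (Add ?m1 ?p1) (Add ?m2 ?p2))" if "w1 = w2"
  proof -
    have "alg_eq R (Add ?m12 (Add ?p1 ?p2)) (Add (Add ?m1 ?m2) (Add ?p1 ?p2))"
      using that by (simp add: alg_eq_Add_cong1 alg_eq.sym[OF alg_eq_Scal_add])
    also have "alg_eq R \<dots> (Add (Add ?m1 ?p1) (Add ?m2 ?p2))" by (rule alg_eq_Add_Add_swap)
    finally show ?thesis .
  qed
  consider "lexordp (<) w1 w2" | "\<not> lexordp (<) w1 w2" "w1 = w2" "snd (qcoeff_add c1 c2) = []"
    | "\<not> lexordp (<) w1 w2" "w1 = w2" "snd (qcoeff_add c1 c2) \<noteq> []" | "\<not> lexordp (<) w1 w2" "w1 \<noteq> w2"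
    by blast
  then show ?case
  proof cases
    case 1
    have "alg_eq R (Add ?m1 (ncpoly_eval q h (ncpoly_add p1 ((w2, c2) # p2))))
        (Add ?m1 (Add ?p1 (Add ?m2 ?p2)))"
      using 1 "3.IH"(1) by (simp add: alg_eq_Add_cong2)
    also have "alg_eq R \<dots> (Add (Add ?m1 ?p1) (Add ?m2 ?p2))" by (rule alg_eq.sym, rule alg_eq.add_assoc)
    finally show ?thesis using 1 by simp
  next
    case 2
    have "qcoeff_eval q c1 + qcoeff_eval q c2 = 0"
      using 2 qcoeff_eval_add[of c1 c2] by (cases "qcoeff_add c1 c2") simp
    then have "alg_eq R (Add ?m12 (Add ?p1 ?p2)) (Add ?p1 ?p2)"
      by (metis alg_eq_Add_cong1 alg_eq.mul_zero alg_eq_zero_Add alg_eq.trans)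
    then have "alg_eq R (Add ?p1 ?p2) (Add ?m12 (Add ?p1 ?p2))" by (rule alg_eq.sym)
    with 2 "3.IH"(2) merge show ?thesis by (simp add: Let_def) (meson alg_eq.trans)
  next
    case 3
    have "alg_eq R (Add ?m12 (ncpoly_eval q h (ncpoly_add p1 p2))) (Add ?m12 (Add ?p1 ?p2))"
      using 3 "3.IH"(3) by (simp add: Let_def alg_eq_Add_cong2)
    with 3 merge show ?thesis by (simp add: Let_def qcoeff_eval_add) (meson alg_eq.trans)
  next
    case 4
    have "alg_eq R (Add ?m2 (ncpoly_eval q h (ncpoly_add ((w1, c1) # p1) p2)))
        (Add ?m2 (Add (Add ?m1 ?p1) ?p2))"
      using 4 "3.IH"(4) by (simp add: alg_eq_Add_cong2)
    also have "alg_eq R \<dots> (Add (Add ?m1 ?p1) (Add ?m2 ?p2))" by (rule alg_eq_Add_left_commute)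
    finally show ?thesis using 4 by simp
  qed
qed


lemma ncpoly_eval_of_list: "alg_eq R (ncpoly_eval q h (ncpoly_of_list ms)) (ncpoly_eval q h ms)"
proof (induction ms)
  case Nil
  show ?case by (simp add: ncpoly_of_list_def alg_eq.refl)
next
  case (Cons m ms)
  obtain w c where m: "m = (w, c)" by (cases m)
  have "alg_eq R (ncpoly_eval q h (ncpoly_add [m] (ncpoly_of_list ms)))
      (Add (ncpoly_eval q h [m]) (ncpoly_eval q h (ncpoly_of_list ms)))"
    by (rule ncpoly_eval_add)
  also have "alg_eq R \<dots> (Add (ncpoly_eval q h [m]) (ncpoly_eval q h ms))"
    by (rule alg_eq_Add_cong2, rule Cons)
  also have "alg_eq R \<dots> (ncpoly_eval q h (m # ms))"
    by (simp add: m alg_eq_Add_cong1 alg_eq.add_zero)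
  finally show ?case by (simp add: ncpoly_of_list_def)
qed

lemma ncpoly_eval_wrap:
  "alg_eq R (ncpoly_eval q h (ncpoly_wrap c u p v))
     (Mul (Scal (qcoeff_eval q c)) (Mul (word_eval h u) (Mul (ncpoly_eval q h p) (word_eval h v))))"
proof (induction p)
  case Nil
  have "alg_eq R (Mul (Scal (qcoeff_eval q c)) (Mul (word_eval h u) (Mul (Scal 0) (word_eval h v)))) (Scal 0)"
    by (meson alg_eq_Mul_cong2 alg_eq.mul_zero alg_eq_Mul_zero_right alg_eq.trans)
  then show ?case by (simp add: ncpoly_wrap_def alg_eq.sym)
next
  case (Cons m p)
  obtain w c' where m: "m = (w, c')" by (cases m)
  let ?s = "qcoeff_eval q c" and ?s' = "qcoeff_eval q c'"
  let ?U = "word_eval h u" and ?W = "word_eval h w" and ?V = "word_eval h v"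
  let ?P = "ncpoly_eval q h p"
  have "alg_eq R (word_eval h (u @ w @ v)) (Mul ?U (Mul ?W ?V))"
    by (meson alg_eq_Mul_cong2 word_eval_append alg_eq.trans)
  then have "alg_eq R (ncpoly_eval q h (ncpoly_wrap c u (m # p) v))
      (Add (Mul (Scal (?s * ?s')) (Mul ?U (Mul ?W ?V))) (Mul (Scal ?s) (Mul ?U (Mul ?P ?V))))"
    using Cons by (simp add: ncpoly_wrap_def m qcoeff_eval_mul alg_eq.add_cong alg_eq_Mul_cong2)
  also have "alg_eq R \<dots> (Add (Mul (Scal ?s) (Mul ?U (Mul (Mul (Scal ?s') ?W) ?V)))
      (Mul (Scal ?s) (Mul ?U (Mul ?P ?V))))"
  proof (rule alg_eq_Add_cong1)
    have "alg_eq R (Mul (Scal ?s) (Mul ?U (Mul (Mul (Scal ?s') ?W) ?V)))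
        (Mul (Scal ?s) (Mul (Scal ?s') (Mul ?U (Mul ?W ?V))))"
      by (meson alg_eq.mul_assoc alg_eq_Mul_Scal_left_commute alg_eq_Mul_cong2 alg_eq.trans)
    also have "alg_eq R \<dots> (Mul (Scal (?s * ?s')) (Mul ?U (Mul ?W ?V)))" by (rule alg_eq_Scal_Mul_Scal)
    finally show "alg_eq R (Mul (Scal (?s * ?s')) (Mul ?U (Mul ?W ?V)))
        (Mul (Scal ?s) (Mul ?U (Mul (Mul (Scal ?s') ?W) ?V)))" by (rule alg_eq.sym)
  qed
  also have "alg_eq R \<dots> (Mul (Scal ?s) (Mul ?U (Mul (ncpoly_eval q h (m # p)) ?V)))"
    by (simp add: m) (meson alg_eq.distrib_left alg_eq.distrib_right alg_eq_Mul_cong2 alg_eq.sym alg_eq.trans)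
  finally show ?case .
qed

lemma ncpoly_eval_mul: "alg_eq R (ncpoly_eval q h (ncpoly_mul p r)) (Mul (ncpoly_eval q h p) (ncpoly_eval q h r))"
proof (induction p)
  case Nil
  show ?case by (simp add: ncpoly_mul_def alg_eq.sym[OF alg_eq.mul_zero])
next
  case (Cons m p)
  obtain w c where m: "m = (w, c)" by (cases m)
  let ?s = "qcoeff_eval q c" and ?W = "word_eval h w" and ?Q = "ncpoly_eval q h r"
  have "alg_eq R (ncpoly_eval q h (ncpoly_of_list (ncpoly_wrap c w r [])))
      (Mul (Scal ?s) (Mul ?W (Mul ?Q (Scal 1))))"
    by (rule alg_eq.trans[OF ncpoly_eval_of_list ncpoly_eval_wrap[where v = "[]", simplified]])
  also have "alg_eq R \<dots> (Mul (Mul (Scal ?s) ?W) ?Q)"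
    by (meson alg_eq.mul_assoc alg_eq.mul_one_right alg_eq_Mul_cong2 alg_eq.sym alg_eq.trans)
  finally have head: "alg_eq R (ncpoly_eval q h (ncpoly_of_list (ncpoly_wrap c w r []))) (Mul (Mul (Scal ?s) ?W) ?Q)" .
  have "alg_eq R (ncpoly_eval q h (ncpoly_mul (m # p) r))
      (Add (ncpoly_eval q h (ncpoly_of_list (ncpoly_wrap c w r []))) (ncpoly_eval q h (ncpoly_mul p r)))"
    unfolding m by (simp add: ncpoly_mul_def ncpoly_eval_add[unfolded ncpoly_mul_def])
  also have "alg_eq R \<dots> (Add (Mul (Mul (Scal ?s) ?W) ?Q) (Mul (ncpoly_eval q h p) ?Q))"
    by (rule alg_eq.add_cong[OF head Cons])
  also have "alg_eq R \<dots> (Mul (ncpoly_eval q h (m # p)) ?Q)"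
    by (simp add: m alg_eq.sym[OF alg_eq.distrib_right])
  finally show ?case .
qed

lemma ncpoly_eval_of_term: "alg_eq R (ncpoly_eval q h (ncpoly_of_term t)) (term_eval q h t)"
proof (induction t)
  case (TVar x)
  show ?case by (simp, meson alg_eq.add_zero alg_eq.mul_one_left alg_eq.trans)
next
  case (TConst c)
  show ?case
    by (cases c) (auto simp: alg_eq.refl intro: alg_eq.trans[OF alg_eq.add_zero alg_eq.mul_one_right])
next
  case (TAdd s t)
  then show ?case by (simp, meson ncpoly_eval_add alg_eq.add_cong alg_eq.trans)
next
  case (TMul s t)
  then show ?case by (simp, meson ncpoly_eval_mul alg_eq.mul_cong alg_eq.trans)
qed

lemma ncpoly_eval_reduce_monomial:
  assumes "rules_sound R q h rs"
  shows "alg_eq R (Mul (Scal (qcoeff_eval q c)) (word_eval h w))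
    (ncpoly_eval q h (reduce_monomial (compile_rules rs) (w, c)))"
proof (cases "find_redex (compile_rules rs) w")
  case None
  then show ?thesis by (simp add: alg_eq.sym[OF alg_eq.add_zero])
next
  case (Some redex)
  then obtain u p v where redex: "find_redex (compile_rules rs) w = Some (u, p, v)" by (cases redex) auto
  then obtain l r where l: "(l, r) \<in> set rs" and p: "p = ncpoly_of_term r" and w: "w = u @ l @ v"
    by (force simp: compile_rules_def dest: find_redex_SomeD)
  have "alg_eq R (word_eval h l) (term_eval q h r)"
    using assms l by (auto simp: rules_sound_def)
  then have lr: "alg_eq R (word_eval h l) (ncpoly_eval q h p)"
    unfolding p by (meson ncpoly_eval_of_term alg_eq.sym alg_eq.trans)
  let ?s = "Scal (qcoeff_eval q c)"
  have "alg_eq R (Mul ?s (word_eval h w)) (Mul ?s (Mul (word_eval h u) (Mul (word_eval h l) (word_eval h v))))"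
    unfolding w by (meson alg_eq_Mul_cong2 word_eval_append alg_eq.trans)
  also have "alg_eq R \<dots> (Mul ?s (Mul (word_eval h u) (Mul (ncpoly_eval q h p) (word_eval h v))))"
    by (intro alg_eq_Mul_cong1 alg_eq_Mul_cong2 lr)
  also have "alg_eq R \<dots> (ncpoly_eval q h (ncpoly_of_list (ncpoly_wrap c u p v)))"
    by (meson ncpoly_eval_of_list ncpoly_eval_wrap alg_eq.sym alg_eq.trans)
  finally show ?thesis using redex by simp
qed

lemma ncpoly_eval_reduce:
  assumes "rules_sound R q h rs"
  shows "alg_eq R (ncpoly_eval q h p) (ncpoly_eval q h (reduce (compile_rules rs) k p))"
proof (induction k arbitrary: p)
  case 0
  show ?case by (simp add: alg_eq.refl)
next
  case (Suc k)
  have "alg_eq R (ncpoly_eval q h p) (ncpoly_eval q h (reduce_step (compile_rules rs) p))"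
  proof (induction p)
    case Nil
    show ?case by (simp add: reduce_step_def alg_eq.refl)
  next
    case (Cons m p)
    obtain w c where m: "m = (w, c)" by (cases m)
    have "alg_eq R (ncpoly_eval q h (m # p))
        (Add (ncpoly_eval q h (reduce_monomial (compile_rules rs) m))
          (ncpoly_eval q h (reduce_step (compile_rules rs) p)))"
      unfolding m ncpoly_eval.simps
      by (rule alg_eq.add_cong[OF ncpoly_eval_reduce_monomial[OF assms] Cons])
    also have "alg_eq R \<dots> (ncpoly_eval q h (reduce_step (compile_rules rs) (m # p)))"
      by (simp add: reduce_step_def alg_eq.sym[OF ncpoly_eval_add])
    finally show ?case .
  qed
  then show ?case using Suc by (simp add: alg_eq.refl) (meson alg_eq.trans)
qed

text \<open>Only the soundness of the rules matters: the rewriting need not terminate or be confluent,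
  since reaching \<open>[]\<close> is established by evaluation.\<close>

theorem alg_eq_0_if_reduce_Nil:
  assumes "rules_sound R q h rs" and "reduce (compile_rules rs) k (ncpoly_of_term t) = []"
  shows "alg_eq R (term_eval q h t) (Scal 0)"
  by (metis assms ncpoly_eval.simps(1) ncpoly_eval_of_term ncpoly_eval_reduce alg_eq.sym alg_eq.trans)

lemma alg_eq_if_reduce_diff_Nil:
  assumes "rules_sound R q h rs" and "reduce (compile_rules rs) k (ncpoly_of_term (nc_diff s t)) = []"
  shows "alg_eq R (term_eval q h s) (term_eval q h t)"
  by (rule alg_eq_of_diff_eq_0) (use alg_eq_0_if_reduce_Nil[OF assms] in \<open>simp add: nc_diff_def\<close>)

end

section \<open>Relations in homomorphic images of \<open>U\<^sub>q(sl\<^sub>n)\<close> and \<open>U'\<^sub>q(so\<^sub>n)\<close>\<close>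

lemma Sub_eq_Sub_iff [simp]: "Sub a b = Sub c d \<longleftrightarrow> a = c \<and> b = d"
  by (simp add: Sub_def)

lemma Sub_neq [simp]: "Sub a b \<noteq> Gen x" "Sub a b \<noteq> Scal c" "Sub a b \<noteq> Mul a' b'"
  by (simp_all add: Sub_def)

lemma cartan_same [simp]: "cartan a a = 2"
  by (simp add: cartan_def)

locale sl_image =
  fixes n :: nat and q :: complex and R :: "('y fa \<times> 'y fa) set" and g :: "slgen \<Rightarrow> 'y fa"
  assumes hom: "extends_to_hom (sl_rels n q) R g"
begin

lemma relation: "(l, r) \<in> sl_rels n q \<Longrightarrow> alg_eq R (subst g l) (subst g r)"
  using hom alg_eq.rel unfolding extends_to_hom_def by blast

lemma K_Kinv: "a \<in> {1..n - 1} \<Longrightarrow> alg_eq R (Mul (g (K a)) (g (Kinv a))) (Scal 1)"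
  using relation[of "Mul (Gen (K a)) (Gen (Kinv a))" "Scal 1"] by (simp add: sl_rels_def)

lemma Kinv_K: "a \<in> {1..n - 1} \<Longrightarrow> alg_eq R (Mul (g (Kinv a)) (g (K a))) (Scal 1)"
  using relation[of "Mul (Gen (Kinv a)) (Gen (K a))" "Scal 1"] by (simp add: sl_rels_def)

lemma K_commute:
  "a \<in> {1..n - 1} \<Longrightarrow> b \<in> {1..n - 1} \<Longrightarrow> alg_eq R (Mul (g (K a)) (g (K b))) (Mul (g (K b)) (g (K a)))"
  using relation[of "Mul (Gen (K a)) (Gen (K b))" "Mul (Gen (K b)) (Gen (K a))"] by (simp add: sl_rels_def)

lemma Kinv_K_commute:
  assumes "a \<in> {1..n - 1}" and "b \<in> {1..n - 1}"
  shows "alg_eq R (Mul (g (Kinv a)) (g (K b))) (Mul (g (K b)) (g (Kinv a)))"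
proof -
  have "alg_eq R (Mul (g (Kinv a)) (g (K b))) (Mul (Mul (g (Kinv a)) (g (K b))) (Mul (g (K a)) (g (Kinv a))))"
    by (rule alg_eq.sym, rule alg_eq_Mul_inverse_right, rule K_Kinv[OF assms(1)])
  also have "alg_eq R \<dots> (Mul (g (Kinv a)) (Mul (Mul (g (K b)) (g (K a))) (g (Kinv a))))"
    by (rule alg_eq_Mul_Mul_reassoc)
  also have "alg_eq R \<dots> (Mul (g (Kinv a)) (Mul (Mul (g (K a)) (g (K b))) (g (Kinv a))))"
    by (intro alg_eq_Mul_cong1 alg_eq_Mul_cong2 K_commute assms)
  also have "alg_eq R \<dots> (Mul (Mul (g (Kinv a)) (g (K a))) (Mul (g (K b)) (g (Kinv a))))"
    by (rule alg_eq.sym, rule alg_eq_Mul_Mul_reassoc)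
  also have "alg_eq R \<dots> (Mul (g (K b)) (g (Kinv a)))"
    by (rule alg_eq_Mul_inverse_left, rule Kinv_K[OF assms(1)])
  finally show ?thesis .
qed

lemma Kinv_commute:
  assumes "a \<in> {1..n - 1}" and "b \<in> {1..n - 1}"
  shows "alg_eq R (Mul (g (Kinv a)) (g (Kinv b))) (Mul (g (Kinv b)) (g (Kinv a)))"
proof -
  have "alg_eq R (Mul (g (Kinv a)) (g (Kinv b))) (Mul (Mul (g (Kinv b)) (g (K b))) (Mul (g (Kinv a)) (g (Kinv b))))"
    by (rule alg_eq.sym, rule alg_eq_Mul_inverse_left, rule Kinv_K[OF assms(2)])
  also have "alg_eq R \<dots> (Mul (g (Kinv b)) (Mul (Mul (g (K b)) (g (Kinv a))) (g (Kinv b))))"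
    by (rule alg_eq_Mul_Mul_reassoc)
  also have "alg_eq R \<dots> (Mul (g (Kinv b)) (Mul (g (Kinv a)) (Mul (g (K b)) (g (Kinv b)))))"
    by (meson Kinv_K_commute assms alg_eq.mul_assoc alg_eq_Mul_cong1 alg_eq_Mul_cong2 alg_eq.sym alg_eq.trans)
  also have "alg_eq R \<dots> (Mul (g (Kinv b)) (g (Kinv a)))"
    by (intro alg_eq_Mul_cong2 alg_eq_Mul_inverse_right K_Kinv assms)
  finally show ?thesis .
qed

lemma K_E_Kinv:
  "a \<in> {1..n - 1} \<Longrightarrow> b \<in> {1..n - 1} \<Longrightarrow>
    alg_eq R (Mul (Mul (g (K a)) (g (E b))) (g (Kinv a))) (Mul (Scal (q powi cartan a b)) (g (E b)))"
  using relation[of "Mul (Mul (Gen (K a)) (Gen (E b))) (Gen (Kinv a))" "Sm (q powi cartan a b) (Gen (E b))"]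
  by (simp add: sl_rels_def Sm_def)

lemma K_F_Kinv:
  "a \<in> {1..n - 1} \<Longrightarrow> b \<in> {1..n - 1} \<Longrightarrow>
    alg_eq R (Mul (Mul (g (K a)) (g (F b))) (g (Kinv a))) (Mul (Scal (q powi - cartan a b)) (g (F b)))"
  using relation[of "Mul (Mul (Gen (K a)) (Gen (F b))) (Gen (Kinv a))" "Sm (q powi - cartan a b) (Gen (F b))"]
  by (simp add: sl_rels_def Sm_def)

lemma K_F:
  "a \<in> {1..n - 1} \<Longrightarrow> b \<in> {1..n - 1} \<Longrightarrow> s = q powi - cartan a b \<Longrightarrow>
    alg_eq R (Mul (g (K a)) (g (F b))) (Mul (Scal s) (Mul (g (F b)) (g (K a))))"
  using alg_eq_conj_exchange_left[OF K_F_Kinv Kinv_K] by simp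

lemma E_Kinv:
  "a \<in> {1..n - 1} \<Longrightarrow> b \<in> {1..n - 1} \<Longrightarrow> s = q powi cartan a b \<Longrightarrow>
    alg_eq R (Mul (g (E b)) (g (Kinv a))) (Mul (Scal s) (Mul (g (Kinv a)) (g (E b))))"
  using alg_eq_conj_exchange_right[OF K_E_Kinv Kinv_K] by simp

lemma Kinv_F:
  assumes "a \<in> {1..n - 1}" and "b \<in> {1..n - 1}" and "s = q powi cartan a b" and "q \<noteq> 0"
  shows "alg_eq R (Mul (g (Kinv a)) (g (F b))) (Mul (Scal s) (Mul (g (F b)) (g (Kinv a))))"
  using alg_eq_Scal_cancel[OF alg_eq_conj_exchange_right[OF K_F_Kinv Kinv_K]] assms
  by (simp add: power_int_minus)

lemma E_K:
  assumes "a \<in> {1..n - 1}" and "b \<in> {1..n - 1}" and "s = q powi - cartan a b" and "q \<noteq> 0"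
  shows "alg_eq R (Mul (g (E b)) (g (K a))) (Mul (Scal s) (Mul (g (K a)) (g (E b))))"
  using alg_eq_Scal_cancel[OF alg_eq_conj_exchange_left[OF K_E_Kinv Kinv_K]] assms
  by (simp add: power_int_minus)

lemma E_F:
  assumes "a \<in> {1..n - 1}" and "b \<in> {1..n - 1}" and "d = (if a = b then 1 / (q - inverse q) else 0)"
  shows "alg_eq R (Mul (g (E a)) (g (F b)))
    (Add (Mul (g (F b)) (g (E a))) (Mul (Scal d) (Add (g (K a)) (Mul (Scal (-1)) (g (Kinv a))))))"
proof -
  have rel: "(Sub (Mul (Gen (E a)) (Gen (F b))) (Mul (Gen (F b)) (Gen (E a))),
      Sm (if a = b then 1 / (q - inverse q) else 0) (Sub (Gen (K a)) (Gen (Kinv a)))) \<in> sl_rels n q"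
    using assms by (simp add: sl_rels_def)
  show ?thesis by (rule alg_eq_of_diff_eq) (use relation[OF rel] assms(3) in \<open>simp add: Sub_def Sm_def\<close>)
qed


lemma E_F_far_commute:
  assumes "x \<in> {E, F}" and "a \<in> {1..n - 1}" and "b \<in> {1..n - 1}" and "a + 1 < b \<or> b + 1 < a"
  shows "alg_eq R (Mul (g (x a)) (g (x b))) (Mul (g (x b)) (g (x a)))"
proof -
  have rel: "(Sub (Mul (Gen (x a)) (Gen (x b))) (Mul (Gen (x b)) (Gen (x a))), Scal 0) \<in> sl_rels n q"
    using assms by (auto simp: sl_rels_def)
  show ?thesis by (rule alg_eq_of_diff_eq_0) (use relation[OF rel] in \<open>simp add: Sub_def\<close>)
qed

lemma E_F_serre:
  assumes "x \<in> {E, F}" and "a \<in> {1..n - 1}" and "b \<in> {1..n - 1}" and "b = a + 1 \<or> a = b + 1"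
  shows "alg_eq R
    (Add (Add (Mul (Mul (g (x a)) (g (x a))) (g (x b)))
              (Mul (Scal (-1)) (Mul (Scal (q + inverse q)) (Mul (Mul (g (x a)) (g (x b))) (g (x a))))))
         (Mul (Mul (g (x b)) (g (x a))) (g (x a))))
    (Scal 0)"
proof -
  have "(Add (Sub (Mul (Mul (Gen (x a)) (Gen (x a))) (Gen (x b)))
      (Sm (q + inverse q) (Mul (Mul (Gen (x a)) (Gen (x b))) (Gen (x a)))))
      (Mul (Mul (Gen (x b)) (Gen (x a))) (Gen (x a))), Scal 0) \<in> sl_rels n q"
    using assms by (auto simp: sl_rels_def)
  from relation[OF this] show ?thesis by (simp add: Sub_def Sm_def)
qed

end

locale so_image =
  fixes n :: nat and q :: complex and R :: "('y fa \<times> 'y fa) set" and g :: "sogen \<Rightarrow> 'y fa"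
  assumes hom: "extends_to_hom (so_rels n q) R g"
begin

lemma relation: "(l, r) \<in> so_rels n q \<Longrightarrow> alg_eq R (subst g l) (subst g r)"
  using hom alg_eq.rel unfolding extends_to_hom_def by blast

lemma far_commute:
  assumes "a \<in> {1..n - 1}" and "b \<in> {1..n - 1}" and "a + 1 < b \<or> b + 1 < a"
  shows "alg_eq R (Mul (g (I a)) (g (I b))) (Mul (g (I b)) (g (I a)))"
  using relation[of "Mul (Gen (I a)) (Gen (I b))" "Mul (Gen (I b)) (Gen (I a))"] assms
  by (simp add: so_rels_def)

lemma cubic:
  assumes "a \<in> {1..n - 1}" and "b \<in> {1..n - 1}" and "b = a + 1 \<or> a = b + 1"
  shows "alg_eq R
    (Add (Add (Mul (Mul (g (I a)) (g (I a))) (g (I b))) (Mul (Mul (g (I b)) (g (I a))) (g (I a))))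
         (Mul (Scal (- (q + inverse q))) (Mul (Mul (g (I a)) (g (I b))) (g (I a)))))
    (Mul (Scal (-1)) (g (I b)))"
proof -
  have "(Add (Add (Mul (Mul (Gen (I a)) (Gen (I a))) (Gen (I b)))
      (Mul (Mul (Gen (I b)) (Gen (I a))) (Gen (I a))))
      (Sm (- (q + inverse q)) (Mul (Mul (Gen (I a)) (Gen (I b))) (Gen (I a)))), Sm (-1) (Gen (I b)))
      \<in> so_rels n q"
    using assms by (auto simp: so_rels_def)
  from relation[OF this] show ?thesis by (simp add: Sm_def)
qed

end

interpretation sl_left: sl_image n q "tensor_rels (sl_rels n q) RB" "\<lambda>x. Gen (Inl x)" for n q RB
  by unfold_locales (rule extends_to_hom_Inl)

interpretation sl_right: sl_image n q "tensor_rels RA (sl_rels n q)" "\<lambda>x. Gen (Inr x)" for n q RA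
  by unfold_locales (rule extends_to_hom_Inr)

interpretation sl_middle: sl_image n q "tensor_rels (tensor_rels RA (sl_rels n q)) RC" "\<lambda>x. Gen (Inl (Inr x))"
  for n q RA RC
  by unfold_locales (use extends_to_hom_comp[OF extends_to_hom_Inr extends_to_hom_Inl] in simp)

interpretation so_right: so_image n q "tensor_rels RA (so_rels n q)" "\<lambda>x. Gen (Inr x)" for n q RA
  by unfold_locales (rule extends_to_hom_Inr)

section \<open>The coaction is well defined\<close>

text \<open>Variables of the checks for a pair of indices \<open>i, j\<close>: \<open>0, 1 = F\<^sub>i, F\<^sub>j\<close>;
  \<open>2, 3 = K\<^sub>i, K\<^sub>j\<close>; \<open>4, 5 = K\<^sub>i\<^sup>-\<^sup>1, K\<^sub>j\<^sup>-\<^sup>1\<close>; \<open>6, 7 = E\<^sub>i, E\<^sub>j\<close>; \<open>8, 9 = I\<^sub>i, I\<^sub>j\<close>.\<close>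

definition pair_vars :: "nat \<Rightarrow> nat \<Rightarrow> nat \<Rightarrow> (slgen + sogen) fa" where
  "pair_vars i j v =
     Gen ([Inl (F i), Inl (F j), Inl (K i), Inl (K j), Inl (Kinv i), Inl (Kinv j),
           Inl (E i), Inl (E j), Inr (I i), Inr (I j)] ! v)"

definition iota_term :: "nc_term \<Rightarrow> nc_term \<Rightarrow> nc_term \<Rightarrow> nc_term" where
  "iota_term f k e = TAdd f (TMul (TConst qc_minus_one) (TMul (TConst (qc_monomial 1 (-1))) (TMul k e)))"

definition phi_term :: "nat \<Rightarrow> nc_term" where
  "phi_term a = TAdd (iota_term (TVar a) (TVar (2 + a)) (TVar (6 + a))) (TMul (TVar (2 + a)) (TVar (8 + a)))"

definition K_rules :: "nc_rule list" where
  "K_rules = [([2, 4], TConst qc_one), ([4, 2], TConst qc_one), ([3, 5], TConst qc_one), ([5, 3], TConst qc_one),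
     ([3, 2], TMul (TVar 2) (TVar 3)), ([5, 4], TMul (TVar 4) (TVar 5)),
     ([3, 4], TMul (TVar 4) (TVar 3)), ([5, 2], TMul (TVar 2) (TVar 5))]"

definition cartan_pair :: "int \<Rightarrow> nat \<Rightarrow> nat \<Rightarrow> int" where
  "cartan_pair c a b = (if a = b then 2 else c)"

definition K_E_F_rules :: "int \<Rightarrow> nc_rule list" where
  "K_E_F_rules c = concat (map (\<lambda>(a, b).
     [([2 + a, b], TMul (TConst (qc_monomial 1 (- cartan_pair c a b))) (TMul (TVar b) (TVar (2 + a)))),
      ([4 + a, b], TMul (TConst (qc_monomial 1 (cartan_pair c a b))) (TMul (TVar b) (TVar (4 + a)))),
      ([6 + b, 2 + a], TMul (TConst (qc_monomial 1 (- cartan_pair c a b))) (TMul (TVar (2 + a)) (TVar (6 + b)))),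
      ([6 + b, 4 + a], TMul (TConst (qc_monomial 1 (cartan_pair c a b))) (TMul (TVar (4 + a)) (TVar (6 + b))))])
     [(0, 0), (0, 1), (1, 0), (1, 1)])"

definition E_F_rules :: "nc_rule list" where
  "E_F_rules = map (\<lambda>(a, b). ([6 + a, b], TAdd (TMul (TVar b) (TVar (6 + a)))
       (TMul (TConst (if a = b then qc_EF else qc_zero))
             (TAdd (TVar (2 + a)) (TMul (TConst qc_minus_one) (TVar (4 + a)))))))
     [(0, 0), (0, 1), (1, 0), (1, 1)]"

definition tensor_rules :: "nc_rule list" where
  "tensor_rules = concat (map (\<lambda>x. map (\<lambda>y. ([8 + x, y], TMul (TVar y) (TVar (8 + x)))) [0..<8]) [0, 1])"

text \<open>Each rule solves a Serre relation (resp. a cubic relation of \<open>U'\<^sub>q(so\<^sub>n)\<close>) for one of its words.\<close>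

definition serre_rules :: "nat \<Rightarrow> nc_rule list" where
  "serre_rules v = (let x = TVar v; y = TVar (v + 1); m = TConst qc_minus_one; t = TConst (qc_qint2 1) in
     [([v + 1, v, v],
       TAdd (TMul m (TAdd (TMul (TMul x x) y) (TMul m (TMul t (TMul (TMul x y) x))))) (TConst qc_zero)),
      ([v + 1, v + 1, v],
       TAdd (TMul m (TAdd (TMul m (TMul t (TMul (TMul y x) y))) (TMul (TMul x y) y))) (TConst qc_zero))])"

definition cubic_rules :: "nc_rule list" where
  "cubic_rules = (let x = TVar 8; y = TVar 9; m = TConst qc_minus_one; t = TConst (qc_qint2 (-1)) in
     [([9, 8, 8],
       TAdd (TMul m (TMul t (TMul (TMul x y) x))) (TAdd (TMul m (TMul (TMul x x) y)) (TMul m y))),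
      ([9, 9, 8],
       TAdd (TMul m (TMul (TMul x y) y)) (TAdd (TMul m (TMul t (TMul (TMul y x) y))) (TMul m x)))])"

definition far_rules :: "nc_rule list" where
  "far_rules = [([1, 0], TMul (TVar 0) (TVar 1)), ([7, 6], TMul (TVar 6) (TVar 7)), ([9, 8], TMul (TVar 8) (TVar 9))]"

definition cubic_term :: "nc_term \<Rightarrow> nc_term \<Rightarrow> nc_term" where
  "cubic_term x y =
     TAdd (TAdd (TMul (TMul x x) y) (TMul (TMul y x) x)) (TMul (TConst (qc_qint2 (-1))) (TMul (TMul x y) x))"

definition adjacent_rules :: "nc_rule list" where
  "adjacent_rules =
     K_rules @ K_E_F_rules (-1) @ E_F_rules @ tensor_rules @ serre_rules 0 @ serre_rules 6 @ cubic_rules"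

definition distant_rules :: "nc_rule list" where
  "distant_rules = K_rules @ K_E_F_rules 0 @ E_F_rules @ tensor_rules @ far_rules"

lemma adjacent_check:
  "reduce (compile_rules adjacent_rules) 20
     (ncpoly_of_term (nc_diff (cubic_term (phi_term 0) (phi_term 1)) (TMul (TConst qc_minus_one) (phi_term 1)))) = []"
  by code_simp

lemma distant_check:
  "reduce (compile_rules distant_rules) 20
     (ncpoly_of_term (nc_diff (TMul (phi_term 0) (phi_term 1)) (TMul (phi_term 1) (phi_term 0)))) = []"
  by code_simp

context q_regular
begin

lemma rules_sound_K_rules:
  assumes "i \<in> {1..n - 1}" and "j \<in> {1..n - 1}"
  shows "rules_sound (tensor_rels (sl_rels n q) RB) q (pair_vars i j) K_rules"
  using assms unfolding rules_sound_def K_rules_def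
  by (auto simp: pair_vars_def intro!: sl_left.K_Kinv sl_left.Kinv_K sl_left.K_commute
      sl_left.Kinv_commute sl_left.Kinv_K_commute alg_eq.sym[OF sl_left.Kinv_K_commute])

lemma rules_sound_K_E_F_rules:
  assumes "i \<in> {1..n - 1}" and "j \<in> {1..n - 1}" and "cartan i j = c" and "cartan j i = c"
  shows "rules_sound (tensor_rels (sl_rels n q) RB) q (pair_vars i j) (K_E_F_rules c)"
  using assms q_nonzero unfolding rules_sound_def K_E_F_rules_def
  by (auto simp: pair_vars_def cartan_pair_def
      intro!: sl_left.K_F sl_left.Kinv_F sl_left.E_K sl_left.E_Kinv)

lemma rules_sound_E_F_rules:
  assumes "i \<in> {1..n - 1}" and "j \<in> {1..n - 1}" and "i \<noteq> j"
  shows "rules_sound (tensor_rels (sl_rels n q) RB) q (pair_vars i j) E_F_rules"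
  using assms unfolding rules_sound_def E_F_rules_def
  by (auto simp: pair_vars_def intro!: sl_left.E_F)

lemma rules_sound_tensor_rules: "rules_sound (tensor_rels RA RB) q (pair_vars i j) tensor_rules"
  unfolding rules_sound_def tensor_rules_def
  by (auto simp: pair_vars_def upt_rec intro!: tensor_rels_commute)

lemma rules_sound_serre_rules:
  assumes "i \<in> {1..n - 1}" and "j \<in> {1..n - 1}" and "j = i + 1 \<or> i = j + 1" and "v \<in> {0, 6}"
  shows "rules_sound (tensor_rels (sl_rels n q) RB) q (pair_vars i j) (serre_rules v)"
proof -
  let ?R = "tensor_rels (sl_rels n q) RB"
  obtain x where x: "x \<in> {E, F}" and vars: "pair_vars i j v = Gen (Inl (x i))" "pair_vars i j (Suc v) = Gen (Inl (x j))"
  proof (cases "v = 0")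
    case True
    then show ?thesis by (intro that[of F]) (simp_all add: pair_vars_def)
  next
    case False
    with assms(4) show ?thesis by (intro that[of E]) (simp_all add: pair_vars_def)
  qed
  note serre_ij = sl_left.E_F_serre[OF x assms(1,2,3)]
  note serre_ji = sl_left.E_F_serre[OF x assms(2,1) disj_commute[THEN iffD1, OF assms(3)]]
  show ?thesis
    unfolding rules_sound_def serre_rules_def Let_def
    using alg_eq.trans[OF alg_eq.sym[OF alg_eq.mul_assoc] alg_eq_solve_right[OF serre_ij]]
      alg_eq.trans[OF alg_eq.sym[OF alg_eq.mul_assoc]
        alg_eq_solve_left[OF alg_eq.trans[OF alg_eq.sym[OF alg_eq.add_assoc] serre_ji]]]
    by (simp add: vars, blast)
qed

lemma rules_sound_cubic_rules:
  assumes "i \<in> {1..n - 1}" and "j \<in> {1..n - 1}" and "j = i + 1 \<or> i = j + 1"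
  shows "rules_sound (tensor_rels RA (so_rels n q)) q (pair_vars i j) cubic_rules"
proof -
  note cubic_ij = so_right.cubic[OF assms(1,2,3)]
  note cubic_ji = so_right.cubic[OF assms(2,1) disj_commute[THEN iffD1, OF assms(3)]]
  show ?thesis
    unfolding rules_sound_def cubic_rules_def Let_def
    using alg_eq.trans[OF alg_eq.sym[OF alg_eq.mul_assoc]
        alg_eq_solve_left[OF alg_eq_solve_right[OF alg_eq.trans[OF alg_eq.sym[OF alg_eq.add_assoc] cubic_ij]]]]
      alg_eq.trans[OF alg_eq.sym[OF alg_eq.mul_assoc] alg_eq_solve_left[OF alg_eq_solve_left[OF cubic_ji]]]
    by (simp add: pair_vars_def, blast)
qed

lemma rules_sound_far_rules:
  assumes "i \<in> {1..n - 1}" and "j \<in> {1..n - 1}" and "i + 1 < j \<or> j + 1 < i"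
  shows "rules_sound (tensor_rels (sl_rels n q) (so_rels n q)) q (pair_vars i j) far_rules"
  using assms unfolding rules_sound_def far_rules_def
  by (auto simp: pair_vars_def
      intro!: sl_left.E_F_far_commute[of F] sl_left.E_F_far_commute[of E] so_right.far_commute)

lemma rules_sound_adjacent_rules:
  assumes "i \<in> {1..n - 1}" and "j \<in> {1..n - 1}" and "j = i + 1 \<or> i = j + 1"
  shows "rules_sound (tensor_rels (sl_rels n q) (so_rels n q)) q (pair_vars i j) adjacent_rules"
  using assms unfolding adjacent_rules_def
  by (auto simp: cartan_def intro!: rules_sound_K_rules rules_sound_K_E_F_rules rules_sound_E_F_rules
      rules_sound_tensor_rules rules_sound_serre_rules rules_sound_cubic_rules)

lemma rules_sound_distant_rules:
  assumes "i \<in> {1..n - 1}" and "j \<in> {1..n - 1}" and "i + 1 < j \<or> j + 1 < i"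
  shows "rules_sound (tensor_rels (sl_rels n q) (so_rels n q)) q (pair_vars i j) distant_rules"
  using assms unfolding distant_rules_def
  by (auto simp: cartan_def intro!: rules_sound_K_rules rules_sound_K_E_F_rules rules_sound_E_F_rules
      rules_sound_tensor_rules rules_sound_far_rules)

lemma term_eval_phi_term:
  "i \<in> {1..n - 1} \<Longrightarrow> term_eval q (pair_vars i j) (phi_term 0) = phi_gen n q (I i)"
  "j \<in> {1..n - 1} \<Longrightarrow> term_eval q (pair_vars i j) (phi_term 1) = phi_gen n q (I j)"
  by (simp_all add: phi_term_def iota_term_def pair_vars_def phi_gen_def iota_gen_def Sub_def Sm_def)

lemma phi_cubic:
  assumes "a \<in> {1..n - 1}" and "b \<in> {1..n - 1}" and "b = a + 1 \<or> a = b + 1" and "t = - (q + inverse q)"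
  shows "alg_eq (tensor_rels (sl_rels n q) (so_rels n q))
    (Add (Add (Mul (Mul (phi_gen n q (I a)) (phi_gen n q (I a))) (phi_gen n q (I b)))
              (Mul (Mul (phi_gen n q (I b)) (phi_gen n q (I a))) (phi_gen n q (I a))))
         (Mul (Scal t) (Mul (Mul (phi_gen n q (I a)) (phi_gen n q (I b))) (phi_gen n q (I a)))))
    (Mul (Scal (-1)) (phi_gen n q (I b)))"
  using alg_eq_if_reduce_diff_Nil[OF rules_sound_adjacent_rules[OF assms(1-3)] adjacent_check] assms(4)
  unfolding cubic_term_def term_eval.simps term_eval_phi_term[OF assms(1)] term_eval_phi_term(2)[OF assms(2)]
  by simp

lemma phi_far_commute:
  assumes "a \<in> {1..n - 1}" and "b \<in> {1..n - 1}" and "a + 1 < b \<or> b + 1 < a"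
  shows "alg_eq (tensor_rels (sl_rels n q) (so_rels n q))
    (Mul (phi_gen n q (I a)) (phi_gen n q (I b))) (Mul (phi_gen n q (I b)) (phi_gen n q (I a)))"
  using alg_eq_if_reduce_diff_Nil[OF rules_sound_distant_rules[OF assms] distant_check]
  unfolding term_eval.simps term_eval_phi_term[OF assms(1)] term_eval_phi_term(2)[OF assms(2)] .

lemma iota_gen_out_of_range: "i \<notin> {1..n - 1} \<Longrightarrow> iota_gen n q (I i) = Scal 0"
  by (simp add: iota_gen_def)

lemma phi_gen_out_of_range: "i \<notin> {1..n - 1} \<Longrightarrow> phi_gen n q (I i) = Scal 0"
  by (simp add: phi_gen_def)

lemma extends_to_hom_phi: "extends_to_hom (so_rels n q) (tensor_rels (sl_rels n q) (so_rels n q)) (phi_gen n q)"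
  unfolding extends_to_hom_iff
proof clarify
  fix l r
  assume rel: "(l, r) \<in> so_rels n q"
  show "alg_eq (tensor_rels (sl_rels n q) (so_rels n q)) (subst (phi_gen n q) l) (subst (phi_gen n q) r)"
    using rel[unfolded so_rels_def]
    by (auto simp: Sm_def phi_gen_out_of_range alg_eq.refl intro!: phi_cubic phi_far_commute)
qed

end

section \<open>Coassociativity, counit and restriction to the coproduct\<close>

text \<open>Variables of the checks for an index \<open>i\<close>: \<open>0, 1, 2 = F\<^sub>i, K\<^sub>i, E\<^sub>i\<close> in the first tensor factor;
  \<open>3, 4, 5, 6 = F\<^sub>i, K\<^sub>i, K\<^sub>i\<^sup>-\<^sup>1, E\<^sub>i\<close> in the second; \<open>7 = I\<^sub>i\<close>.\<close>

definition coproduct_vars :: "nat \<Rightarrow> nat \<Rightarrow> (slgen + slgen) fa" where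
  "coproduct_vars i v =
     Gen ([Inl (F i), Inl (K i), Inl (E i), Inr (F i), Inr (K i), Inr (Kinv i), Inr (E i)] ! v)"

definition coassoc_vars :: "nat \<Rightarrow> nat \<Rightarrow> ((slgen + slgen) + sogen) fa" where
  "coassoc_vars i v =
     Gen ([Inl (Inl (F i)), Inl (Inl (K i)), Inl (Inl (E i)), Inl (Inr (F i)), Inl (Inr (K i)),
           Inl (Inr (Kinv i)), Inl (Inr (E i)), Inr (I i)] ! v)"

definition coproduct_rules :: "nc_rule list" where
  "coproduct_rules = [([4, 2], TMul (TVar 2) (TVar 4)), ([4, 5], TConst qc_one)]"

definition Delta_iota_term :: nc_term where
  "Delta_iota_term = iota_term (TAdd (TVar 0) (TMul (TVar 1) (TVar 3))) (TMul (TVar 1) (TVar 4))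
     (TAdd (TMul (TVar 2) (TVar 5)) (TVar 6))"

definition id_iota_phi_term :: nc_term where
  "id_iota_phi_term =
     TAdd (iota_term (TVar 0) (TVar 1) (TVar 2)) (TMul (TVar 1) (iota_term (TVar 3) (TVar 4) (TVar 6)))"

definition Delta_phi_term :: nc_term where
  "Delta_phi_term = TAdd Delta_iota_term (TMul (TMul (TVar 1) (TVar 4)) (TVar 7))"

definition id_phi_phi_term :: nc_term where
  "id_phi_phi_term = TAdd (iota_term (TVar 0) (TVar 1) (TVar 2))
     (TMul (TVar 1) (TAdd (iota_term (TVar 3) (TVar 4) (TVar 6)) (TMul (TVar 4) (TVar 7))))"

definition eps_phi_term :: nc_term where
  "eps_phi_term =
     TAdd (iota_term (TConst qc_zero) (TConst qc_one) (TConst qc_zero)) (TMul (TConst qc_one) (TVar 0))"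

lemma coassoc_check:
  "reduce (compile_rules coproduct_rules) 10 (ncpoly_of_term (nc_diff Delta_phi_term id_phi_phi_term)) = []"
  by code_simp

lemma coproduct_iota_check:
  "reduce (compile_rules coproduct_rules) 10 (ncpoly_of_term (nc_diff id_iota_phi_term Delta_iota_term)) = []"
  by code_simp

lemma counit_check: "reduce (compile_rules []) 1 (ncpoly_of_term (nc_diff eps_phi_term (TVar 0))) = []"
  by code_simp

lemma alg_eq_subst_cong_sogen:
  "(\<And>i. alg_eq R (f (I i)) (g (I i))) \<Longrightarrow> alg_eq R (subst f a) (subst g a)"
  by (rule alg_eq_subst_cong) (metis sogen.exhaust)

context q_regular
begin

lemma rules_sound_coproduct_coassoc:
  "i \<in> {1..n - 1} \<Longrightarrow>
    rules_sound (tensor_rels (tensor_rels RA (sl_rels n q)) RC) q (coassoc_vars i) coproduct_rules"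
  using alg_eq_map_Inl[where RB = RC, OF tensor_rels_commute[of RA "sl_rels n q" "K i" "E i"]]
  by (simp add: rules_sound_def coproduct_rules_def coassoc_vars_def sl_middle.K_Kinv)

lemma rules_sound_coproduct:
  "i \<in> {1..n - 1} \<Longrightarrow> rules_sound (tensor_rels RA (sl_rels n q)) q (coproduct_vars i) coproduct_rules"
  by (simp add: rules_sound_def coproduct_rules_def coproduct_vars_def sl_right.K_Kinv tensor_rels_commute)

lemma phi_coassoc_gen:
  assumes "i \<in> {1..n - 1}"
  shows "alg_eq (tensor_rels (tensor_rels (sl_rels n q) (sl_rels n q)) (so_rels n q))
    (subst (Delta_id n) (phi_gen n q (I i))) (subst (id_phi n q) (phi_gen n q (I i)))"
  using alg_eq_if_reduce_diff_Nil[OF rules_sound_coproduct_coassoc[OF assms] coassoc_check] assms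
  by (simp add: Delta_phi_term_def Delta_iota_term_def id_phi_phi_term_def iota_term_def coassoc_vars_def
      Delta_id_def id_phi_def sl_Delta_def sl_gen_in_range_def phi_gen_def iota_gen_def Sub_def Sm_def)

lemma phi_id_iota_gen:
  assumes "i \<in> {1..n - 1}"
  shows "alg_eq (tensor_rels (sl_rels n q) (sl_rels n q))
    (subst (id_iota n q) (phi_gen n q (I i))) (subst (sl_Delta n) (iota_gen n q (I i)))"
  using alg_eq_if_reduce_diff_Nil[OF rules_sound_coproduct[OF assms] coproduct_iota_check] assms
  by (simp add: Delta_iota_term_def id_iota_phi_term_def iota_term_def coproduct_vars_def
      id_iota_def sl_Delta_def sl_gen_in_range_def phi_gen_def iota_gen_def Sub_def Sm_def)

lemma phi_counit_gen:
  assumes "i \<in> {1..n - 1}"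
  shows "alg_eq (so_rels n q) (subst (eps_id n) (phi_gen n q (I i))) (Gen (I i))"
  using alg_eq_if_reduce_diff_Nil[OF _ counit_check, of "so_rels n q" "\<lambda>_. Gen (I i)"] assms
  by (simp add: rules_sound_def eps_phi_term_def iota_term_def eps_id_def sl_eps_def sl_gen_in_range_def
      phi_gen_def iota_gen_def Sub_def Sm_def)

lemma phi_coassociative:
  "alg_eq (tensor_rels (tensor_rels (sl_rels n q) (sl_rels n q)) (so_rels n q))
     (subst (Delta_id n) (subst (phi_gen n q) a)) (subst (id_phi n q) (subst (phi_gen n q) a))"
  unfolding subst_subst
proof (rule alg_eq_subst_cong_sogen)
  fix i
  show "alg_eq (tensor_rels (tensor_rels (sl_rels n q) (sl_rels n q)) (so_rels n q))
      (subst (Delta_id n) (phi_gen n q (I i))) (subst (id_phi n q) (phi_gen n q (I i)))"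
    using phi_coassoc_gen[of i] by (cases "i \<in> {1..n - 1}") (simp_all add: phi_gen_out_of_range alg_eq.refl)
qed

lemma phi_counital: "alg_eq (so_rels n q) (subst (eps_id n) (subst (phi_gen n q) a)) a"
proof -
  have "alg_eq (so_rels n q) (subst (\<lambda>x. subst (eps_id n) (phi_gen n q x)) a) (subst Gen a)"
  proof (rule alg_eq_subst_cong_sogen)
    fix i
    have "i \<notin> {1..n - 1} \<Longrightarrow> alg_eq (so_rels n q) (Scal 0) (Gen (I i))"
      by (rule alg_eq.sym, rule alg_eq.rel) (simp add: so_rels_def)
    then show "alg_eq (so_rels n q) (subst (eps_id n) (phi_gen n q (I i))) (Gen (I i))"
      using phi_counit_gen[of i] by (cases "i \<in> {1..n - 1}") (simp_all add: phi_gen_out_of_range)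
  qed
  then show ?thesis by (simp add: subst_subst subst_Gen)
qed

lemma phi_id_iota:
  "alg_eq (tensor_rels (sl_rels n q) (sl_rels n q))
     (subst (id_iota n q) (subst (phi_gen n q) a)) (subst (sl_Delta n) (subst (iota_gen n q) a))"
  unfolding subst_subst
proof (rule alg_eq_subst_cong_sogen)
  fix i
  show "alg_eq (tensor_rels (sl_rels n q) (sl_rels n q))
      (subst (id_iota n q) (phi_gen n q (I i))) (subst (sl_Delta n) (iota_gen n q (I i)))"
    using phi_id_iota_gen[of i]
    by (cases "i \<in> {1..n - 1}") (simp_all add: phi_gen_out_of_range iota_gen_out_of_range alg_eq.refl)
qed

end

theorem proposition1:
  fixes n :: nat and q :: complex
  assumes "n \<ge> 2" and "q \<noteq> 0" and "q \<noteq> 1" and "q \<noteq> -1"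
    and "\<forall>m::nat. m > 0 \<longrightarrow> q ^ m \<noteq> 1"
  shows "extends_to_hom (so_rels n q) (tensor_rels (sl_rels n q) (so_rels n q)) (phi_gen n q)
    \<and> (\<forall>a. alg_eq (tensor_rels (tensor_rels (sl_rels n q) (sl_rels n q)) (so_rels n q))
            (subst (Delta_id n) (subst (phi_gen n q) a))
            (subst (id_phi n q) (subst (phi_gen n q) a)))
    \<and> (\<forall>a. alg_eq (so_rels n q) (subst (eps_id n) (subst (phi_gen n q) a)) a)
    \<and> (\<forall>a. alg_eq (tensor_rels (sl_rels n q) (sl_rels n q))
            (subst (id_iota n q) (subst (phi_gen n q) a))
            (subst (sl_Delta n) (subst (iota_gen n q) a)))"
proof -
  interpret q_regular q
    using assms(2-4) by unfold_locales (simp_all add: power2_eq_1_iff)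
  show ?thesis
    using extends_to_hom_phi phi_coassociative phi_counital phi_id_iota by blast
qed

end
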